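(* Let $G$ be a connected graph and $\sigma$ a BFS ordering of $G$. If the $\mathcal{F}$-tree $T$ of $\sigma$ has at most $k$ leaves, then the bandwidth of $\sigma$ is at most $k$.
   Context: All graphs are finite, simple, undirected, connected and non-empty. A BFS ordering is an ordering of $V(G)$ produced by breadth-first search: pick a start vertex, mark it visited and put it in a queue; repeatedly remove the front vertex $v$ of the queue and append all not yet visited neighbors of $v$ (in some order) to the queue, marking them visited; the ordering is the order in which vertices are visited. The $\mathcal{F}$-tree of an ordering $\sigma=(v_1,\dots,v_n)$ (where each $v_i$, $i>1$, has an earlier neighbor) is the spanning tree rooted at $v_1$ in which the parent of each $v_i$, $i>1$, is its neighbor appearing leftmost in $\sigma$. A leaf is a non-root vertex of the tree without children (the root is never a leaf). The bandwidth of $\sigma=(v_1,\dots,v_n)$ is $\max_{v_iv_j\in E(G)}|i-j|$. *)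

theory Defs
  imports Main
begin

definition simple_graph :: "'a set \<Rightarrow> ('a \<Rightarrow> 'a \<Rightarrow> bool) \<Rightarrow> bool" where
  "simple_graph V E \<longleftrightarrow> finite V \<and> (\<forall>u v. E u v \<longrightarrow> u \<in> V \<and> v \<in> V)
     \<and> (\<forall>u v. E u v \<longrightarrow> E v u) \<and> (\<forall>v. \<not> E v v)"

definition connected_graph :: "'a set \<Rightarrow> ('a \<Rightarrow> 'a \<Rightarrow> bool) \<Rightarrow> bool" where
  "connected_graph V E \<longleftrightarrow> V \<noteq> {} \<and> (\<forall>u\<in>V. \<forall>v\<in>V. E\<^sup>*\<^sup>* u v)"

text \<open>BFS process: states are (queue, visited vertices in order of visiting).\<close>
inductive bfs_state :: "'a set \<Rightarrow> ('a \<Rightarrow> 'a \<Rightarrow> bool) \<Rightarrow> 'a list \<Rightarrow> 'a list \<Rightarrow> bool"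
  for V E where
  start: "v \<in> V \<Longrightarrow> bfs_state V E [v] [v]"
| step: "bfs_state V E (v # Q) vis \<Longrightarrow> distinct L \<Longrightarrow>
         set L = {u. E v u \<and> u \<notin> set vis} \<Longrightarrow>
         bfs_state V E (Q @ L) (vis @ L)"

definition bfs_ordering :: "'a set \<Rightarrow> ('a \<Rightarrow> 'a \<Rightarrow> bool) \<Rightarrow> 'a list \<Rightarrow> bool" where
  "bfs_ordering V E \<sigma> \<longleftrightarrow> bfs_state V E [] \<sigma> \<and> distinct \<sigma> \<and> set \<sigma> = V"

text \<open>F-tree parent of a non-first vertex: its leftmost neighbour in the ordering.\<close>
definition ftree_parent :: "('a \<Rightarrow> 'a \<Rightarrow> bool) \<Rightarrow> 'a list \<Rightarrow> 'a \<Rightarrow> 'a" where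
  "ftree_parent E \<sigma> v = \<sigma> ! (LEAST j. j < length \<sigma> \<and> E (\<sigma> ! j) v)"

definition ftree_leaves :: "('a \<Rightarrow> 'a \<Rightarrow> bool) \<Rightarrow> 'a list \<Rightarrow> 'a set" where
  "ftree_leaves E \<sigma> = {v \<in> set \<sigma>. v \<noteq> hd \<sigma> \<and>
      \<not> (\<exists>w \<in> set \<sigma>. w \<noteq> hd \<sigma> \<and> ftree_parent E \<sigma> w = v)}"

definition bandwidth :: "('a \<Rightarrow> 'a \<Rightarrow> bool) \<Rightarrow> 'a list \<Rightarrow> nat" where
  "bandwidth E \<sigma> = Max ({0} \<union> {if i \<le> j then j - i else i - j | i j.
      i < length \<sigma> \<and> j < length \<sigma> \<and> E (\<sigma> ! i) (\<sigma> ! j)})"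

end

theory Submission
  imports Defs
begin

text \<open>
  In a BFS ordering the index of the F-tree parent is monotone in the index of the child.
  Let \<open>\<sigma>\<^sub>i \<sigma>\<^sub>j\<close> with \<open>i < j\<close> be an edge, so that the parent of \<open>\<sigma>\<^sub>j\<close> lies at a position \<open>\<le> i\<close>.
  By monotonicity every proper ancestor of a vertex at a position in \<open>{i<..j}\<close> lies at a
  position \<open>\<le> i\<close>, so these \<open>j - i\<close> vertices form an antichain of the F-tree.
  Below each of them lies a leaf, and leaves below distinct members of an antichain are
  distinct; hence \<open>j - i\<close> is at most the number of leaves.
\<close>

definition discovered_from_prefix :: "('a \<Rightarrow> 'a \<Rightarrow> bool) \<Rightarrow> 'a list \<Rightarrow> nat \<Rightarrow> bool" where
  "discovered_from_prefix E vis d \<longleftrightarrow>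
    (\<forall>b. 0 < b \<and> b < length vis \<longrightarrow> (\<exists>a<b. a < d \<and> E (vis ! a) (vis ! b)))"

definition prefix_neighbours_visited :: "('a \<Rightarrow> 'a \<Rightarrow> bool) \<Rightarrow> 'a list \<Rightarrow> nat \<Rightarrow> bool" where
  "prefix_neighbours_visited E vis d \<longleftrightarrow> (\<forall>a<d. \<forall>u. E (vis ! a) u \<longrightarrow> u \<in> set vis)"

text \<open>An equivalent form of the four-point condition characterising BFS orderings.\<close>

definition bfs_four_point :: "('a \<Rightarrow> 'a \<Rightarrow> bool) \<Rightarrow> 'a list \<Rightarrow> bool" where
  "bfs_four_point E vis \<longleftrightarrow> (\<forall>x a b. x < a \<and> a < b \<and> b < length vis \<and> E (vis ! x) (vis ! b)
     \<longrightarrow> (\<exists>y\<le>x. E (vis ! y) (vis ! a)))"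

lemma discovered_from_prefix_append:
  assumes old: "discovered_from_prefix E vis d" and "d < length vis"
    and new: "\<And>u. u \<in> set L \<Longrightarrow> E (vis ! d) u"
  shows "discovered_from_prefix E (vis @ L) (Suc d)"
  unfolding discovered_from_prefix_def
proof (intro allI impI)
  fix b assume b: "0 < b \<and> b < length (vis @ L)"
  show "\<exists>a<b. a < Suc d \<and> E ((vis @ L) ! a) ((vis @ L) ! b)"
  proof (cases "b < length vis")
    case True
    then obtain a where "a < b" "a < d" "E (vis ! a) (vis ! b)"
      using old b unfolding discovered_from_prefix_def by blast
    with True show ?thesis by (intro exI[of _ a]) (simp add: nth_append)
  next
    case False
    then have "(vis @ L) ! b \<in> set L" using b by (auto simp: nth_append intro!: nth_mem)
    with False \<open>d < length vis\<close> show ?thesis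
      by (intro exI[of _ d]) (simp add: nth_append new)
  qed
qed

lemma prefix_neighbours_visited_append:
  assumes old: "prefix_neighbours_visited E vis d" and "d < length vis"
    and new: "\<And>u. E (vis ! d) u \<Longrightarrow> u \<in> set vis \<union> set L"
  shows "prefix_neighbours_visited E (vis @ L) (Suc d)"
  unfolding prefix_neighbours_visited_def
proof (intro allI impI)
  fix a u assume "a < Suc d" and "E ((vis @ L) ! a) u"
  with \<open>d < length vis\<close> have u: "E (vis ! a) u" and "a \<le> d" by (simp_all add: nth_append)
  show "u \<in> set (vis @ L)"
  proof (cases "a < d")
    case True
    with old u show ?thesis unfolding prefix_neighbours_visited_def by simp
  next
    case False
    with \<open>a \<le> d\<close> u new show ?thesis by simp
  qed
qed

lemma bfs_four_point_append:
  assumes four_point: "bfs_four_point E vis"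
    and discovered: "discovered_from_prefix E vis d"
    and visited: "prefix_neighbours_visited E vis d"
    and "d < length vis" and L: "set L = {u. E (vis ! d) u \<and> u \<notin> set vis}"
  shows "bfs_four_point E (vis @ L)"
  unfolding bfs_four_point_def
proof (intro allI impI)
  fix x a b
  assume h: "x < a \<and> a < b \<and> b < length (vis @ L) \<and> E ((vis @ L) ! x) ((vis @ L) ! b)"
  let ?w = "vis @ L"
  have old_nth: "?w ! i = vis ! i" if "i < length vis" for i
    using that by (simp add: nth_append)
  have new_nth: "E (vis ! d) (?w ! i)" "?w ! i \<notin> set vis"
    if "length vis \<le> i" "i < length ?w" for i
  proof -
    have "?w ! i \<in> set L" using that by (simp add: nth_append)
    then show "E (vis ! d) (?w ! i)" "?w ! i \<notin> set vis" using L by auto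
  qed
  show "\<exists>y\<le>x. E (?w ! y) (?w ! a)"
  proof (cases "b < length vis")
    case True
    then obtain y where "y \<le> x" "E (vis ! y) (vis ! a)"
      using four_point h old_nth[of x] old_nth[of b] unfolding bfs_four_point_def by auto
    with h True show ?thesis by (intro exI[of _ y]) (simp add: old_nth)
  next
    case False
    \<comment> \<open>\<open>?w ! b\<close> is new, so its neighbour \<open>?w ! x\<close> has not been dequeued yet\<close>
    have "d \<le> x"
    proof (rule ccontr)
      assume "\<not> d \<le> x"
      with h \<open>d < length vis\<close> have "x < d" "E (vis ! x) (?w ! b)" by (simp_all add: old_nth)
      with visited have "?w ! b \<in> set vis"
        unfolding prefix_neighbours_visited_def by blast
      with False h new_nth(2) show False by simp
    qed
    show ?thesis
    proof (cases "a < length vis")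
      case True
      moreover have "0 < a" using h by simp
      ultimately obtain y where "y < d" "E (vis ! y) (vis ! a)"
        using discovered unfolding discovered_from_prefix_def by blast
      with True \<open>d \<le> x\<close> \<open>d < length vis\<close> show ?thesis
        by (intro exI[of _ y]) (simp add: old_nth)
    next
      case False
      with h \<open>d \<le> x\<close> \<open>d < length vis\<close> show ?thesis
        by (intro exI[of _ d]) (simp add: old_nth new_nth)
    qed
  qed
qed

text \<open>\<open>D\<close> is the list of vertices already removed from the queue.\<close>

lemma bfs_state_invariant:
  assumes "bfs_state V E Q vis"
  shows "\<exists>D. vis = D @ Q \<and> discovered_from_prefix E vis (length D)
    \<and> prefix_neighbours_visited E vis (length D) \<and> bfs_four_point E vis"
  using assms
proof (induction rule: bfs_state.induct)
  case (start v)
  show ?case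
    unfolding discovered_from_prefix_def prefix_neighbours_visited_def bfs_four_point_def
    by (rule exI[of _ "[]"]) auto
next
  case (step v Q vis L)
  then obtain D where D: "vis = D @ v # Q"
    and discovered: "discovered_from_prefix E vis (length D)"
    and visited: "prefix_neighbours_visited E vis (length D)"
    and four_point: "bfs_four_point E vis"
    by blast
  have d: "length D < length vis" and L: "set L = {u. E (vis ! length D) u \<and> u \<notin> set vis}"
    using D step.hyps(3) by simp_all
  have "discovered_from_prefix E (vis @ L) (length (D @ [v]))"
    using discovered_from_prefix_append[OF discovered d, where L = L] L by simp
  moreover have "prefix_neighbours_visited E (vis @ L) (length (D @ [v]))"
    using prefix_neighbours_visited_append[OF visited d, where L = L] L by auto
  moreover have "bfs_four_point E (vis @ L)"
    using bfs_four_point_append[OF four_point discovered visited d L] .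
  moreover have "vis @ L = (D @ [v]) @ Q @ L" using D by simp
  ultimately show ?case by blast
qed

locale bfs_order =
  fixes E :: "'a \<Rightarrow> 'a \<Rightarrow> bool" and \<sigma> :: "'a list"
  assumes earlier_neighbour: "\<And>b. 0 < b \<Longrightarrow> b < length \<sigma> \<Longrightarrow> \<exists>a<b. E (\<sigma> ! a) (\<sigma> ! b)"
    and four_point: "\<And>x a b. x < a \<Longrightarrow> a < b \<Longrightarrow> b < length \<sigma> \<Longrightarrow> E (\<sigma> ! x) (\<sigma> ! b)
          \<Longrightarrow> \<exists>y\<le>x. E (\<sigma> ! y) (\<sigma> ! a)"
    and distinct: "distinct \<sigma>"

lemma bfs_ordering_imp_bfs_order:
  assumes "bfs_ordering V E \<sigma>"
  shows "bfs_order E \<sigma>"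
proof -
  from assms have "bfs_state V E [] \<sigma>" and "distinct \<sigma>"
    unfolding bfs_ordering_def by auto
  then obtain D where "\<sigma> = D @ []" and "discovered_from_prefix E \<sigma> (length D)"
    and "bfs_four_point E \<sigma>"
    using bfs_state_invariant by blast
  with \<open>distinct \<sigma>\<close> show ?thesis
    unfolding bfs_order_def discovered_from_prefix_def bfs_four_point_def by blast
qed

context bfs_order
begin

text \<open>\<open>parent 0\<close> is a junk value (\<open>LEAST\<close> of an empty predicate); \<open>child\<close> never uses it.\<close>

definition parent :: "nat \<Rightarrow> nat" where
  "parent b = (LEAST j. j < length \<sigma> \<and> E (\<sigma> ! j) (\<sigma> ! b))"

definition child :: "nat \<Rightarrow> nat \<Rightarrow> bool" where
  "child p c \<longleftrightarrow> 0 < c \<and> c < length \<sigma> \<and> parent c = p"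

definition leaf_indices :: "nat set" where
  "leaf_indices = {l. 0 < l \<and> l < length \<sigma> \<and> \<not> (\<exists>c. child l c)}"

lemma ftree_parent_nth: "ftree_parent E \<sigma> (\<sigma> ! b) = \<sigma> ! parent b"
  unfolding ftree_parent_def parent_def ..

lemma parent_le: "x < length \<sigma> \<Longrightarrow> E (\<sigma> ! x) (\<sigma> ! b) \<Longrightarrow> parent b \<le> x"
  unfolding parent_def by (rule Least_le) simp

lemma parent_less_adj:
  assumes "0 < b" "b < length \<sigma>"
  shows "parent b < b" and "E (\<sigma> ! parent b) (\<sigma> ! b)"
proof -
  obtain a where a: "a < b" "E (\<sigma> ! a) (\<sigma> ! b)" using earlier_neighbour assms by blast
  with assms show "parent b < b" using parent_le[of a b] by simp
  have "parent b < length \<sigma> \<and> E (\<sigma> ! parent b) (\<sigma> ! b)"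
    unfolding parent_def by (rule LeastI[of _ a]) (use a assms in simp)
  then show "E (\<sigma> ! parent b) (\<sigma> ! b)" by simp
qed

lemma parent_mono:
  assumes "0 < a" "a \<le> b" "b < length \<sigma>"
  shows "parent a \<le> parent b"
proof (cases "a < b \<and> parent b < a")
  case True
  with assms obtain y where "y \<le> parent b" "E (\<sigma> ! y) (\<sigma> ! a)"
    using four_point parent_less_adj(2)[of b] by blast
  with assms show ?thesis using parent_le[of y a] parent_less_adj(1)[of b] by simp
next
  case False
  with assms show ?thesis using parent_less_adj(1)[of a] by (cases "a = b") auto
qed

lemma tranclp_child_less: "child\<^sup>+\<^sup>+ a b \<Longrightarrow> a < b"
  by (induction rule: tranclp_induct) (auto simp: child_def dest: parent_less_adj(1))

lemma ancestors_comparable: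
  "child\<^sup>*\<^sup>* a l \<Longrightarrow> child\<^sup>*\<^sup>* b l \<Longrightarrow> child\<^sup>*\<^sup>* a b \<or> child\<^sup>*\<^sup>* b a"
proof (induction rule: rtranclp_induct)
  case (step y z)
  show ?case
  proof (cases "b = z")
    case True
    with step show ?thesis by (meson rtranclp.rtrancl_into_rtrancl)
  next
    case False
    with step.prems obtain y' where "child\<^sup>*\<^sup>* b y'" "child y' z"
      by (metis rtranclp.cases)
    moreover from \<open>child y' z\<close> \<open>child y z\<close> have "y' = y" unfolding child_def by simp
    ultimately show ?thesis using step.IH by simp
  qed
qed simp

lemma ex_leaf_descendant: "0 < b \<Longrightarrow> b < length \<sigma> \<Longrightarrow> \<exists>l. child\<^sup>*\<^sup>* b l \<and> l \<in> leaf_indices"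
proof (induction "length \<sigma> - b" arbitrary: b rule: less_induct)
  case less
  show ?case
  proof (cases "\<exists>c. child b c")
    case False
    with less.prems show ?thesis unfolding leaf_indices_def by auto
  next
    case True
    then obtain c where c: "child b c" by blast
    then have "b < c" "c < length \<sigma>" using tranclp_child_less[of b c] unfolding child_def by auto
    moreover have "length \<sigma> - c < length \<sigma> - b" using \<open>b < c\<close> \<open>c < length \<sigma>\<close> by simp
    ultimately obtain l where "child\<^sup>*\<^sup>* c l" "l \<in> leaf_indices"
      using less.hyps[of c] less.prems by auto
    with c show ?thesis by (meson converse_rtranclp_into_rtranclp)
  qed
qed

lemma proper_ancestor_le_edge_start:
  assumes edge: "i < j" "j < length \<sigma>" "E (\<sigma> ! i) (\<sigma> ! j)"
    and "a \<le> j" and "child\<^sup>+\<^sup>+ b a"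
  shows "b \<le> i"
proof -
  obtain y where "child b y" "child\<^sup>*\<^sup>* y a" using \<open>child\<^sup>+\<^sup>+ b a\<close> by (meson tranclpD)
  then have "0 < y" "y \<le> j" "parent y = b"
    using \<open>a \<le> j\<close> tranclp_child_less[of y a] unfolding child_def
    by (auto dest: rtranclpD)
  with edge have "b \<le> parent j" using parent_mono[of y j] by simp
  also have "parent j \<le> i" using edge parent_le by simp
  finally show ?thesis .
qed

lemma edge_span_antichain:
  assumes edge: "i < j" "j < length \<sigma>" "E (\<sigma> ! i) (\<sigma> ! j)"
    and "a \<in> {i<..j}" "b \<in> {i<..j}"
    and "child\<^sup>*\<^sup>* a l" "child\<^sup>*\<^sup>* b l"
  shows "a = b"
  using ancestors_comparable[OF assms(6,7)] assms(4,5)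
    proper_ancestor_le_edge_start[OF edge, of a b] proper_ancestor_le_edge_start[OF edge, of b a]
  by (auto dest: rtranclpD)

lemma ftree_leaves_eq_image:
  assumes "\<sigma> \<noteq> []"
  shows "ftree_leaves E \<sigma> = (!) \<sigma> ` leaf_indices"
proof -
  let ?I = "{0<..<length \<sigma>}"
  have hd: "hd \<sigma> = \<sigma> ! 0" using assms by (simp add: hd_conv_nth)
  have inj: "inj_on ((!) \<sigma>) {..<length \<sigma>}" using distinct by (simp add: inj_on_nth)
  have nonroot: "{w \<in> set \<sigma>. w \<noteq> hd \<sigma>} = (!) \<sigma> ` ?I"
  proof (intro set_eqI iffI)
    fix w assume "w \<in> {w \<in> set \<sigma>. w \<noteq> hd \<sigma>}"
    then obtain c where "c < length \<sigma>" "w = \<sigma> ! c" "c \<noteq> 0"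
      by (auto simp: in_set_conv_nth hd)
    then show "w \<in> (!) \<sigma> ` ?I" by auto
  next
    fix w assume "w \<in> (!) \<sigma> ` ?I"
    then obtain c where "0 < c" "c < length \<sigma>" "w = \<sigma> ! c" by auto
    with distinct show "w \<in> {w \<in> set \<sigma>. w \<noteq> hd \<sigma>}"
      using assms nth_eq_iff_index_eq[of \<sigma> c 0] by (simp add: hd)
  qed
  have "ftree_leaves E \<sigma> = (!) \<sigma> ` ?I - ftree_parent E \<sigma> ` (!) \<sigma> ` ?I"
    unfolding ftree_leaves_def nonroot[symmetric] by blast
  also have "\<dots> = (!) \<sigma> ` ?I - (!) \<sigma> ` parent ` ?I"
    unfolding image_image ftree_parent_nth ..
  also have "\<dots> = (!) \<sigma> ` (?I - parent ` ?I)"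
  proof (rule inj_on_image_set_diff[OF inj, symmetric])
    have "parent c < length \<sigma>" if "c \<in> ?I" for c
      using that parent_less_adj(1)[of c] by simp
    then show "?I - parent ` ?I \<subseteq> {..<length \<sigma>}" "parent ` ?I \<subseteq> {..<length \<sigma>}"
      by auto
  qed
  also have "?I - parent ` ?I = leaf_indices"
    unfolding leaf_indices_def child_def by auto
  finally show ?thesis .
qed

lemma edge_span_le_card_ftree_leaves:
  assumes edge: "i < j" "j < length \<sigma>" "E (\<sigma> ! i) (\<sigma> ! j)"
  shows "j - i \<le> card (ftree_leaves E \<sigma>)"
proof -
  define leaf_below where "leaf_below a = (SOME l. child\<^sup>*\<^sup>* a l \<and> l \<in> leaf_indices)" for a
  have leaf_below: "child\<^sup>*\<^sup>* a (leaf_below a) \<and> leaf_below a \<in> leaf_indices" if "a \<in> {i<..j}" for a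
    unfolding leaf_below_def by (rule someI_ex, rule ex_leaf_descendant) (use that edge in auto)
  have "inj_on leaf_below {i<..j}"
  proof (rule inj_onI)
    fix a b assume "a \<in> {i<..j}" "b \<in> {i<..j}" "leaf_below a = leaf_below b"
    then show "a = b"
      using edge_span_antichain[OF edge, of a b "leaf_below a"] leaf_below[of a] leaf_below[of b]
      by simp
  qed
  moreover have "finite leaf_indices" unfolding leaf_indices_def by simp
  ultimately have "card {i<..j} \<le> card leaf_indices"
    using leaf_below by (intro card_inj_on_le) auto
  also have "\<dots> = card ((!) \<sigma> ` leaf_indices)"
    by (intro card_image[symmetric] inj_on_nth distinct) (simp add: leaf_indices_def)
  also have "\<dots> = card (ftree_leaves E \<sigma>)"
    using edge by (subst ftree_leaves_eq_image) auto
  finally show ?thesis by simp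
qed

end

lemma bandwidth_le:
  assumes sym: "\<And>u v. E u v \<Longrightarrow> E v u"
    and span: "\<And>i j. i < j \<Longrightarrow> j < length \<sigma> \<Longrightarrow> E (\<sigma> ! i) (\<sigma> ! j) \<Longrightarrow> j - i \<le> k"
  shows "bandwidth E \<sigma> \<le> k"
proof -
  define S where "S = {if i \<le> j then j - i else i - j | i j.
      i < length \<sigma> \<and> j < length \<sigma> \<and> E (\<sigma> ! i) (\<sigma> ! j)}"
  have "S \<subseteq> {..length \<sigma>}" unfolding S_def by auto
  then have "finite S" by (rule finite_subset) simp
  moreover have "s \<le> k" if s: "s \<in> S" for s
  proof -
    obtain i j where "s = (if i \<le> j then j - i else i - j)"
      and "i < length \<sigma>" "j < length \<sigma>" "E (\<sigma> ! i) (\<sigma> ! j)"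
      using s unfolding S_def by blast
    then show ?thesis
      using span[of i j] span[of j i] sym[of "\<sigma> ! i" "\<sigma> ! j"]
      by (cases i j rule: linorder_cases) auto
  qed
  ultimately show ?thesis
    unfolding bandwidth_def S_def[symmetric] by simp
qed

theorem theorem3p3:
  fixes V :: "'a set" and E :: "'a \<Rightarrow> 'a \<Rightarrow> bool" and \<sigma> :: "'a list" and k :: nat
  assumes "simple_graph V E" and "connected_graph V E"
    and "bfs_ordering V E \<sigma>"
    and "card (ftree_leaves E \<sigma>) \<le> k"
  shows "bandwidth E \<sigma> \<le> k"
proof (rule bandwidth_le)
  \<comment> \<open>only symmetry of \<open>E\<close> and the BFS run are used\<close>
  show "E v u" if "E u v" for u v
    using assms(1) that unfolding simple_graph_def by auto
  interpret bfs_order E \<sigma>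
    using bfs_ordering_imp_bfs_order[OF assms(3)] .
  show "j - i \<le> k" if "i < j" "j < length \<sigma>" "E (\<sigma> ! i) (\<sigma> ! j)" for i j
    using edge_span_le_card_ftree_leaves[OF that] assms(4) by linarith
qed

end
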